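(* Let $G$ be a finite graph with minimum degree at least $3$, let $x_0$ be a vertex of $G$, let $P$ be a longest path in $G$ starting at $x_0$, and let $(S,T)$ be the Pósa pair of $P$. Let $T_1$ be the set of vertices $t\in T$ having exactly one neighbor in $S$. Let $G^*$ be the graph on vertex set $S\cup(T\setminus T_1)$ whose edges are the edges of $G$ between vertices of $S\cup (T\setminus T_1)$ having at least one endpoint in $S$, and let $d(v;G^* )$ denote the degree of $v$ in $G^*$. Let $S_2=\{v\in S: d(v;G^* )=2\}$. Then: (i) No vertex of $S_2$ is adjacent in $G^*$ both to a vertex of $S_2$ and to a vertex of $T\setminus T_1$. (ii) Write $s=|S|$, $t=|T|$, $t_1=|T_1|$, and suppose $e(S\cup T)=(1+\sigma)(s+t)$ for some $\sigma>0$, where $e(S\cup T)$ is the number of edges of $G$ with both endpoints in $S\cup T$. Then $$s-2\sigma(s+t)\le t_1\le s,\qquad \sum_{v\in S\cup(T\setminus T_1)}\bigl[d(v;G^* )-2\bigr]\le 2\sigma(s+t).$$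
   Context: Rotations and Pósa sets: If $Q=x_0x_1\dots x_h$ is a path from $x_0$ and $\{x_h,x_i\}$ is an edge of $G$ for some $i<h-1$, then $Q'=x_0\dots x_i x_h x_{h-1}\dots x_{i+1}$ is again a path from $x_0$ of the same length, said to be obtained from $Q$ by a rotation. For a longest path $P=x_0\dots x_h$ from $x_0$, $S$ is the set consisting of $x_h$ and the endpoints (other than $x_0$) of all paths obtainable from $P$ by any finite sequence of rotations, and $T=N(S)$ is the set of vertices not in $S$ having a neighbor in $S$. *)

theory Defs
  imports Complex_Main
begin

definition fin_graph :: "'a set \<Rightarrow> ('a \<Rightarrow> 'a \<Rightarrow> bool) \<Rightarrow> bool" where
  "fin_graph V E \<longleftrightarrow> finite V \<and> (\<forall>x y. E x y \<longrightarrow> x \<in> V \<and> y \<in> V)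
     \<and> (\<forall>x y. E x y \<longrightarrow> E y x) \<and> (\<forall>x. \<not> E x x)"

definition degree :: "'a set \<Rightarrow> ('a \<Rightarrow> 'a \<Rightarrow> bool) \<Rightarrow> 'a \<Rightarrow> nat" where
  "degree V E v = card {u \<in> V. E v u}"

text \<open>A path is a nonempty list of distinct vertices, consecutive ones adjacent.
  Its length is the number of edges, i.e. length xs - 1; it starts at hd xs.\<close>
definition is_path :: "'a set \<Rightarrow> ('a \<Rightarrow> 'a \<Rightarrow> bool) \<Rightarrow> 'a list \<Rightarrow> bool" where
  "is_path V E xs \<longleftrightarrow> xs \<noteq> [] \<and> distinct xs \<and> set xs \<subseteq> V
     \<and> (\<forall>i. Suc i < length xs \<longrightarrow> E (xs ! i) (xs ! Suc i))"

definition longest_path_from :: "'a set \<Rightarrow> ('a \<Rightarrow> 'a \<Rightarrow> bool) \<Rightarrow> 'a \<Rightarrow> 'a list \<Rightarrow> bool" where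
  "longest_path_from V E x0 P \<longleftrightarrow> is_path V E P \<and> hd P = x0
     \<and> (\<forall>Q. is_path V E Q \<and> hd Q = x0 \<longrightarrow> length Q \<le> length P)"

text \<open>Rotation: Q = x_0 ... x_h, edge {x_h, x_i} with i < h - 1, gives
  x_0 ... x_i x_h x_(h-1) ... x_(i+1).  (h = length Q - 1.)\<close>
definition rotation :: "('a \<Rightarrow> 'a \<Rightarrow> bool) \<Rightarrow> 'a list \<Rightarrow> 'a list \<Rightarrow> bool" where
  "rotation E Q Q' \<longleftrightarrow> (\<exists>i. i + 2 < length Q \<and> E (last Q) (Q ! i)
     \<and> Q' = take (Suc i) Q @ rev (drop (Suc i) Q))"

definition posa_S :: "('a \<Rightarrow> 'a \<Rightarrow> bool) \<Rightarrow> 'a list \<Rightarrow> 'a set" where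
  "posa_S E P = {last Q | Q. (rotation E)\<^sup>*\<^sup>* P Q}"

definition nbhd :: "'a set \<Rightarrow> ('a \<Rightarrow> 'a \<Rightarrow> bool) \<Rightarrow> 'a set \<Rightarrow> 'a set" where
  "nbhd V E S = {v \<in> V - S. \<exists>u \<in> S. E v u}"

definition edges_in :: "('a \<Rightarrow> 'a \<Rightarrow> bool) \<Rightarrow> 'a set \<Rightarrow> nat" where
  "edges_in E A = card {{u, v} | u v. u \<in> A \<and> v \<in> A \<and> E u v}"

end

theory Submission imports Defs begin

text \<open>If the only neighbour of a vertex \<open>t\<close> in the Posa set \<open>S\<close> is \<open>y\<close>, then \<open>t\<close> is the
  predecessor of \<open>y\<close> on every rotated path ending at \<open>y\<close>: otherwise rotating along the edge
  \<open>yt\<close> makes the successor of \<open>t\<close> an end vertex, i.e. a second neighbour of \<open>t\<close> in \<open>S\<close>.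
  Hence each \<open>y \<in> S\<close> has at most one such private neighbour; this gives \<open>t\<^sub>1 \<le> s\<close> and part (i).
  Part (ii) is double counting: \<open>d(v;G\<^sup>*) \<ge> 3 - |N(v) \<inter> T\<^sub>1|\<close> on \<open>S\<close>, \<open>d(v;G\<^sup>*) \<ge> 2\<close> on
  \<open>T - T\<^sub>1\<close>, and the oriented edges of \<open>G\<^sup>*\<close> together with both orientations of the edges
  between \<open>T\<^sub>1\<close> and \<open>S\<close> are distinct oriented edges of \<open>G[S \<union> T]\<close>.\<close>

lemma is_path_iff_successively:
  "is_path V E xs \<longleftrightarrow> xs \<noteq> [] \<and> distinct xs \<and> set xs \<subseteq> V \<and> successively E xs"
  unfolding is_path_def successively_conv_nth by blast

lemma rotation_is_path:
  assumes graph: "fin_graph V E" and path: "is_path V E Q" and rot: "rotation E Q Q'"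
  shows "is_path V E Q' \<and> hd Q' = hd Q \<and> length Q' = length Q"
proof -
  obtain i where i: "i + 2 < length Q" "E (last Q) (Q ! i)"
    and Q': "Q' = take (Suc i) Q @ rev (drop (Suc i) Q)"
    using rot unfolding rotation_def by blast
  have sym: "\<And>x y. E x y \<Longrightarrow> E y x" using graph unfolding fin_graph_def by blast
  have Q: "distinct Q" "set Q \<subseteq> V" "successively E Q"
    using path unfolding is_path_iff_successively by auto
  have "successively E (take (Suc i) Q)" "successively E (drop (Suc i) Q)"
    using Q(3) by (metis append_take_drop_id successively_append_iff)+
  moreover have "last (take (Suc i) Q) = Q ! i" using i by (simp add: take_Suc_conv_app_nth)
  moreover have "hd (rev (drop (Suc i) Q)) = last Q" using i by (simp add: hd_rev)
  ultimately have "successively E Q'"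
    unfolding Q' successively_append_iff successively_rev using i sym
    by (auto intro: successively_mono)
  moreover have "distinct Q'" unfolding Q' using Q(1) by (simp add: set_take_disj_set_drop_if_distinct)
  moreover have "set Q' = set Q" unfolding Q' by (metis append_take_drop_id set_append set_rev)
  moreover have "hd Q' = hd Q" "length Q' = length Q" unfolding Q' using i by (cases Q; simp)+
  ultimately show ?thesis using Q path unfolding is_path_iff_successively by auto
qed

lemma rotations_longest_path_from:
  assumes graph: "fin_graph V E" and longest: "longest_path_from V E x0 P"
    and rots: "(rotation E)\<^sup>*\<^sup>* P Q"
  shows "longest_path_from V E x0 Q"
  using rots
proof (induction rule: rtranclp_induct)
  case base
  show ?case using longest .
next
  case (step Q Q')
  then show ?case
    using rotation_is_path[OF graph _ step(2)] unfolding longest_path_from_def by metis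
qed

lemma longest_path_from_last_neighbour:
  assumes graph: "fin_graph V E" and longest: "longest_path_from V E x0 Q" and "E (last Q) u"
  shows "u \<in> set Q"
proof (rule ccontr)
  assume u: "u \<notin> set Q"
  have "u \<in> V" using graph \<open>E (last Q) u\<close> unfolding fin_graph_def by blast
  moreover have "is_path V E Q" "hd Q = x0" using longest unfolding longest_path_from_def by auto
  ultimately have "is_path V E (Q @ [u]) \<and> hd (Q @ [u]) = x0"
    using u \<open>E (last Q) u\<close> unfolding is_path_iff_successively successively_append_iff by auto
  then have "length (Q @ [u]) \<le> length Q" using longest unfolding longest_path_from_def by blast
  then show False by simp
qed

lemma posa_S_subset:
  assumes graph: "fin_graph V E" and longest: "longest_path_from V E x0 P"
  shows "posa_S E P \<subseteq> V"
proof
  fix y assume "y \<in> posa_S E P"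
  then obtain Q where Q: "(rotation E)\<^sup>*\<^sup>* P Q" "y = last Q" unfolding posa_S_def by blast
  have "is_path V E Q"
    using rotations_longest_path_from[OF graph longest Q(1)] unfolding longest_path_from_def by simp
  then show "y \<in> V" using Q(2) unfolding is_path_def by (metis last_in_set subsetD)
qed

lemma posa_S_sole_neighbour_penultimate:
  assumes graph: "fin_graph V E" and longest: "longest_path_from V E x0 P"
    and rots: "(rotation E)\<^sup>*\<^sup>* P Q" and sole: "{u \<in> posa_S E P. E t u} = {last Q}"
  shows "t = Q ! (length Q - 2)"
proof -
  have sym: "\<And>x y. E x y \<Longrightarrow> E y x" and irrefl: "\<And>x. \<not> E x x"
    using graph unfolding fin_graph_def by blast+
  have E_t_last: "E t (last Q)" using sole by blast
  have longest_Q: "longest_path_from V E x0 Q" using rotations_longest_path_from[OF graph longest rots] .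
  then have Q: "Q \<noteq> []" "distinct Q" "\<forall>i. Suc i < length Q \<longrightarrow> E (Q ! i) (Q ! Suc i)"
    unfolding longest_path_from_def is_path_def by auto
  have last_Q: "last Q = Q ! (length Q - 1)" using Q(1) by (simp add: last_conv_nth)
  have "t \<in> set Q" using longest_path_from_last_neighbour[OF graph longest_Q sym[OF E_t_last]] .
  then obtain k where k: "k < length Q" "Q ! k = t" by (metis in_set_conv_nth)
  have "k \<noteq> length Q - 1" using k last_Q E_t_last irrefl by metis
  moreover have "\<not> k + 2 < length Q"
  proof
    assume k2: "k + 2 < length Q"
    define Q' where "Q' = take (Suc k) Q @ rev (drop (Suc k) Q)"
    have "rotation E Q Q'" unfolding rotation_def Q'_def using k2 k E_t_last sym by blast
    with rots have "(rotation E)\<^sup>*\<^sup>* P Q'" by simp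
    moreover have "last Q' = Q ! Suc k"
      unfolding Q'_def using k2 by (simp add: hd_drop_conv_nth hd_rev[symmetric] last_rev)
    ultimately have "Q ! Suc k \<in> posa_S E P"
      unfolding posa_S_def by (metis (mono_tags, lifting) mem_Collect_eq)
    moreover have "E t (Q ! Suc k)" using Q(3) k2 k by auto
    ultimately have "Q ! Suc k = Q ! (length Q - 1)" using sole last_Q by auto
    then show False using Q(2) k2 by (simp add: nth_eq_iff_index_eq)
  qed
  ultimately have "k = length Q - 2" using k(1) by linarith
  then show ?thesis using k(2) by simp
qed

definition unique_private_neighbours :: "('a \<Rightarrow> 'a \<Rightarrow> bool) \<Rightarrow> 'a set \<Rightarrow> bool" where
  "unique_private_neighbours E S \<longleftrightarrow>
     (\<forall>y t t'. {u \<in> S. E t u} = {y} \<longrightarrow> {u \<in> S. E t' u} = {y} \<longrightarrow> t = t')"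

lemma unique_private_neighbours_posa_S:
  assumes graph: "fin_graph V E" and longest: "longest_path_from V E x0 P"
  shows "unique_private_neighbours E (posa_S E P)"
  unfolding unique_private_neighbours_def
proof (intro allI impI)
  fix y t t' assume sole: "{u \<in> posa_S E P. E t u} = {y}" "{u \<in> posa_S E P. E t' u} = {y}"
  then obtain Q where Q: "(rotation E)\<^sup>*\<^sup>* P Q" "y = last Q" unfolding posa_S_def by blast
  show "t = t'"
    using sole posa_S_sole_neighbour_penultimate[OF graph longest Q(1)] unfolding Q(2) by metis
qed

lemma sum_card_neighbours_swap:
  assumes "finite A" "finite B" and sym: "\<And>x y. E x y \<Longrightarrow> E y x"
  shows "(\<Sum>a\<in>A. card {b \<in> B. E a b}) = (\<Sum>b\<in>B. card {a \<in> A. E b a})"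
proof -
  have "(\<Sum>a\<in>A. card {b \<in> B. E a b}) = card (SIGMA a:A. {b \<in> B. E a b})"
    using assms by simp
  also have "\<dots> = card (prod.swap ` (SIGMA b:B. {a \<in> A. E b a}))"
    using sym by (intro arg_cong[where f = card]) (auto simp: image_iff)
  also have "\<dots> = (\<Sum>b\<in>B. card {a \<in> A. E b a})"
    using assms by (simp add: card_image)
  finally show ?thesis .
qed

lemma card_adjacent_pairs_le:
  assumes "finite A"
  shows "card {(u, v). u \<in> A \<and> v \<in> A \<and> E u v} \<le> 2 * edges_in E A"
proof -
  let ?D = "{(u, v). u \<in> A \<and> v \<in> A \<and> E u v}"
  let ?Ed = "{{u, v} | u v. u \<in> A \<and> v \<in> A \<and> E u v}"
  let ?fibre = "\<lambda>e. {(u, v). {u, v} = e}"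
  have fibre: "finite (?fibre e) \<and> card (?fibre e) \<le> 2" if "e \<in> ?Ed" for e
  proof -
    obtain a b where e: "e = {a, b}" using \<open>e \<in> ?Ed\<close> by blast
    have sub: "?fibre e \<subseteq> {(a, b), (b, a)}" unfolding e by (auto simp: doubleton_eq_iff)
    then have "card (?fibre e) \<le> card {(a, b), (b, a)}" by (intro card_mono) auto
    also have "\<dots> \<le> 2" by (simp add: card_insert_le_m1)
    finally show ?thesis using sub by (meson finite.emptyI finite.insertI finite_subset)
  qed
  have "finite ?D" using finite_cartesian_product[OF assms assms] by (rule rev_finite_subset) auto
  moreover have "?Ed = (\<lambda>(u, v). {u, v}) ` ?D" by auto
  ultimately have "finite ?Ed" by simp
  have "card ?D \<le> card (\<Union>e\<in>?Ed. ?fibre e)"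
    using \<open>finite ?Ed\<close> fibre by (intro card_mono) auto
  also have "\<dots> \<le> (\<Sum>e\<in>?Ed. card (?fibre e))" by (rule card_UN_le[OF \<open>finite ?Ed\<close>])
  also have "\<dots> \<le> (\<Sum>e\<in>?Ed. 2)" using fibre by (intro sum_mono) blast
  finally show ?thesis unfolding edges_in_def by simp
qed

text \<open>The Posa set enters only through minimum degree 3 on \<open>S\<close> and uniqueness of private
  neighbours, so \<open>S\<close> is kept abstract here.\<close>

locale posa_star_graph =
  fixes V :: "'a set" and E :: "'a \<Rightarrow> 'a \<Rightarrow> bool"
    and S T T1 W :: "'a set" and Estar :: "'a \<Rightarrow> 'a \<Rightarrow> bool" and dstar :: "'a \<Rightarrow> nat"
  assumes graph: "fin_graph V E"
    and S_subset: "S \<subseteq> V"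
    and mindeg: "\<forall>v \<in> S. degree V E v \<ge> 3"
    and unique_private: "unique_private_neighbours E S"
    and T_def: "T = nbhd V E S"
    and T1_def: "T1 = {t \<in> T. card {u \<in> S. E t u} = 1}"
    and W_def: "W = S \<union> (T - T1)"
    and Estar_def: "Estar = (\<lambda>u v. u \<in> W \<and> v \<in> W \<and> E u v \<and> (u \<in> S \<or> v \<in> S))"
    and dstar_def: "dstar = (\<lambda>v. card {u \<in> W. Estar v u})"
begin

lemma E_sym: "E x y \<Longrightarrow> E y x"
  using graph unfolding fin_graph_def by blast

lemma edge_in_V: "E x y \<Longrightarrow> y \<in> V"
  using graph unfolding fin_graph_def by blast

lemma finite_V: "finite V"
  using graph unfolding fin_graph_def by blast

lemma T_subset: "T \<subseteq> V" and S_T_disjoint: "S \<inter> T = {}" and T1_subset: "T1 \<subseteq> T"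
  unfolding T_def T1_def nbhd_def by auto

lemma finite_S: "finite S" and finite_T: "finite T" and finite_T1: "finite T1"
  and finite_W: "finite W"
  using finite_subset[OF S_subset finite_V] finite_subset[OF T_subset finite_V]
    T1_subset finite_subset
  unfolding W_def by auto

lemma T1_sole_neighbour:
  assumes "t \<in> T1" obtains y where "{u \<in> S. E t u} = {y}"
proof -
  have "card {u \<in> S. E t u} = 1" using assms unfolding T1_def by simp
  then show thesis using that by (rule card_1_singletonE)
qed

lemma Gstar_neighbours_S:
  assumes "v \<in> S" shows "{u \<in> W. Estar v u} = {u \<in> V. E v u} - T1"
proof (intro equalityI subsetI)
  fix u assume "u \<in> {u \<in> W. Estar v u}"
  then show "u \<in> {u \<in> V. E v u} - T1"
    using edge_in_V S_T_disjoint T1_subset unfolding Estar_def W_def by blast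
next
  fix u assume u: "u \<in> {u \<in> V. E v u} - T1"
  then have "u \<in> S \<or> u \<in> T" using assms E_sym unfolding T_def nbhd_def by blast
  then show "u \<in> {u \<in> W. Estar v u}" using u assms unfolding Estar_def W_def by blast
qed

lemma Gstar_neighbours_T:
  assumes "v \<in> T - T1" shows "{u \<in> W. Estar v u} = {u \<in> S. E v u}"
  using assms S_T_disjoint unfolding Estar_def W_def by auto

lemma dstar_S_lower: "v \<in> S \<Longrightarrow> 3 \<le> dstar v + card {u \<in> T1. E v u}"
proof -
  assume "v \<in> S"
  have "{u \<in> V. E v u} \<inter> T1 = {u \<in> T1. E v u}" using T1_subset T_subset by auto
  then have "card {u \<in> V. E v u} = card {u \<in> T1. E v u} + dstar v"
    using card_Int_Diff[of "{u \<in> V. E v u}" T1] finite_V Gstar_neighbours_S[OF \<open>v \<in> S\<close>]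
    unfolding dstar_def by simp
  then show ?thesis using mindeg \<open>v \<in> S\<close> unfolding degree_def by auto
qed

lemma dstar_T_lower: "v \<in> T - T1 \<Longrightarrow> 2 \<le> dstar v"
proof -
  assume v: "v \<in> T - T1"
  then have "{u \<in> S. E v u} \<noteq> {}" "card {u \<in> S. E v u} \<noteq> 1"
    unfolding T_def T1_def nbhd_def by auto
  then have "card {u \<in> S. E v u} \<noteq> 0" "card {u \<in> S. E v u} \<noteq> 1" using finite_S by auto
  then show ?thesis unfolding dstar_def Gstar_neighbours_T[OF v] by linarith
qed

text \<open>A vertex of \<open>S\<^sub>2\<close> adjacent to \<open>a \<in> S\<^sub>2\<close> and to some \<open>b \<in> T - T\<^sub>1\<close> would be a
  private neighbour of \<open>a\<close>; but \<open>a\<close> loses a neighbour to \<open>T\<^sub>1\<close>, which is then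
  a second private neighbour of \<open>a\<close>.\<close>

lemma S2_no_S2_and_T_neighbours:
  assumes v: "v \<in> S" "dstar v = 2"
    and a: "a \<in> S" "dstar a = 2" "Estar v a" and b: "b \<in> T - T1" "Estar v b"
  shows False
proof -
  have "a \<noteq> b" using a b S_T_disjoint by auto
  moreover have "{a, b} \<subseteq> {u \<in> W. Estar v u}" using a b unfolding Estar_def by auto
  ultimately have nbrs_v: "{u \<in> W. Estar v u} = {a, b}"
    using v(2) finite_W unfolding dstar_def by (intro card_subset_eq[symmetric]) auto
  have "w = a" if "w \<in> S" "E v w" for w
  proof -
    have "w \<in> {u \<in> W. Estar v u}"
      using that edge_in_V S_T_disjoint T1_subset Gstar_neighbours_S[OF v(1)] by blast
    then show ?thesis using nbrs_v b(1) that(1) S_T_disjoint by blast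
  qed
  moreover have "E v a" using a(3) unfolding Estar_def by simp
  ultimately have sole_v: "{u \<in> S. E v u} = {a}" using a(1) by blast
  have "card {u \<in> T1. E a u} \<noteq> 0" using dstar_S_lower[OF a(1)] a(2) by linarith
  then have "{u \<in> T1. E a u} \<noteq> {}" by (metis card.empty)
  then obtain c where c: "c \<in> T1" "E a c" by blast
  obtain y where sole_c: "{u \<in> S. E c u} = {y}" using c(1) by (rule T1_sole_neighbour)
  moreover have "E c a" using c(2) by (rule E_sym)
  ultimately have "a \<in> {y}" using a(1) by blast
  then have "y = a" by simp
  then have "v = c"
    using unique_private sole_v sole_c unfolding unique_private_neighbours_def by blast
  then show False using v(1) c(1) T1_subset S_T_disjoint by blast
qed

lemma card_T1_le_card_S: "card T1 \<le> card S"
proof -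
  define f where "f t = (THE y. {u \<in> S. E t u} = {y})" for t
  have f: "{u \<in> S. E t u} = {f t}" if t: "t \<in> T1" for t
  proof -
    obtain y where y: "{u \<in> S. E t u} = {y}" using t by (rule T1_sole_neighbour)
    then have "f t = y" unfolding f_def by (simp add: the_equality)
    then show ?thesis using y by simp
  qed
  have "inj_on f T1"
  proof (rule inj_onI)
    fix t t' assume t: "t \<in> T1" "t' \<in> T1" "f t = f t'"
    then have "{u \<in> S. E t' u} = {f t}" using f by simp
    then show "t = t'"
      using f[OF t(1)] unique_private unfolding unique_private_neighbours_def by blast
  qed
  moreover have "f ` T1 \<subseteq> S" using f by blast
  ultimately show ?thesis using finite_S by (rule card_inj_on_le)
qed

lemma sum_card_T1_neighbours: "(\<Sum>v\<in>S. card {u \<in> T1. E v u}) = card T1"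
proof -
  have "(\<Sum>v\<in>S. card {u \<in> T1. E v u}) = (\<Sum>t\<in>T1. card {u \<in> S. E t u})"
    using finite_S finite_T1 E_sym by (rule sum_card_neighbours_swap)
  also have "\<dots> = (\<Sum>t\<in>T1. 1)" unfolding T1_def by simp
  finally show ?thesis by simp
qed

lemma excess_lower: "real (card S) - real (card T1) \<le> (\<Sum>v \<in> W. real (dstar v) - 2)"
proof -
  have "real (card S) - real (card T1) = (\<Sum>v \<in> S. 1 - real (card {u \<in> T1. E v u}))"
    using sum_card_T1_neighbours by (simp add: sum_subtractf flip: of_nat_sum)
  also have "\<dots> \<le> (\<Sum>v \<in> S. real (dstar v) - 2)"
  proof (rule sum_mono)
    fix v assume "v \<in> S"
    then have "real 3 \<le> real (dstar v + card {u \<in> T1. E v u})"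
      using dstar_S_lower by (simp only: of_nat_le_iff)
    then show "1 - real (card {u \<in> T1. E v u}) \<le> real (dstar v) - 2" by simp
  qed
  also have "\<dots> \<le> (\<Sum>v \<in> S. real (dstar v) - 2) + (\<Sum>v \<in> T - T1. real (dstar v) - 2)"
    using dstar_T_lower by (intro add_increasing2 sum_nonneg) force+
  also have "\<dots> = (\<Sum>v \<in> W. real (dstar v) - 2)"
    unfolding W_def using finite_S finite_T S_T_disjoint by (intro sum.union_disjoint[symmetric]) auto
  finally show ?thesis .
qed

lemma sum_dstar_le: "(\<Sum>v \<in> W. dstar v) + 2 * card T1 \<le> 2 * edges_in E (S \<union> T)"
proof -
  let ?Dstar = "SIGMA v:W. {u \<in> W. Estar v u}"
  let ?D1 = "SIGMA t:T1. {u \<in> S. E t u}"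
  let ?D2 = "SIGMA v:S. {t \<in> T1. E v t}"
  let ?D = "{(u, v). u \<in> S \<union> T \<and> v \<in> S \<union> T \<and> E u v}"
  have card_D1: "card ?D1 = card T1" using finite_T1 finite_S by (simp add: T1_def)
  have card_D2: "card ?D2 = card T1"
    using finite_T1 finite_S sum_card_T1_neighbours by simp
  have fin: "finite ?Dstar" "finite ?D1" "finite ?D2" using finite_W finite_T1 finite_S by auto
  have "?Dstar \<inter> ?D1 = {}" "(?Dstar \<union> ?D1) \<inter> ?D2 = {}"
    unfolding W_def using S_T_disjoint T1_subset by auto
  then have "card ?Dstar + card ?D1 + card ?D2 = card (?Dstar \<union> ?D1 \<union> ?D2)"
    using fin by (simp add: card_Un_disjoint)
  also have "\<dots> \<le> card ?D"
  proof (rule card_mono)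
    show "finite ?D"
      by (rule rev_finite_subset[of "(S \<union> T) \<times> (S \<union> T)"]) (use finite_S finite_T in auto)
    show "?Dstar \<union> ?D1 \<union> ?D2 \<subseteq> ?D" unfolding Estar_def W_def using T1_subset by auto
  qed
  also have "\<dots> \<le> 2 * edges_in E (S \<union> T)"
    using finite_S finite_T by (intro card_adjacent_pairs_le) simp
  finally show ?thesis
    using card_D1 card_D2 finite_W unfolding dstar_def by simp
qed

lemma excess_upper:
  "(\<Sum>v \<in> W. real (dstar v) - 2)
     \<le> 2 * real (edges_in E (S \<union> T)) - 2 * (real (card S) + real (card T))"
proof -
  have "card W = card S + (card T - card T1)"
    unfolding W_def using finite_S finite_T finite_T1 S_T_disjoint T1_subset
    by (subst card_Un_disjoint) (auto simp: card_Diff_subset)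
  moreover have "card T1 \<le> card T" using T1_subset finite_T by (rule card_mono[rotated])
  ultimately have card_W: "real (card W) = real (card S) + real (card T) - real (card T1)" by simp
  have "(\<Sum>v \<in> W. real (dstar v) - 2) = real (\<Sum>v \<in> W. dstar v) - 2 * real (card W)"
    by (simp add: sum_subtractf)
  also have "\<dots> = real (\<Sum>v \<in> W. dstar v) + 2 * real (card T1) - 2 * (real (card S) + real (card T))"
    unfolding card_W by simp
  also have "\<dots> \<le> 2 * real (edges_in E (S \<union> T)) - 2 * (real (card S) + real (card T))"
    using of_nat_mono[OF sum_dstar_le, where 'a = real] by simp
  finally show ?thesis .
qed

end

theorem lemma2p2:
  fixes V :: "'a set" and E :: "'a \<Rightarrow> 'a \<Rightarrow> bool" and x0 :: 'a and P :: "'a list"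
    and S T T1 W :: "'a set" and Estar :: "'a \<Rightarrow> 'a \<Rightarrow> bool" and dstar :: "'a \<Rightarrow> nat"
  assumes graph: "fin_graph V E"
    and mindeg: "\<forall>v \<in> V. degree V E v \<ge> 3"
    and x0: "x0 \<in> V"
    and longest: "longest_path_from V E x0 P"
  defines "S \<equiv> posa_S E P"
    and "T \<equiv> nbhd V E S"
    and "T1 \<equiv> {t \<in> T. card {u \<in> S. E t u} = 1}"
    and "W \<equiv> S \<union> (T - T1)"
    and "Estar \<equiv> (\<lambda>u v. u \<in> W \<and> v \<in> W \<and> E u v \<and> (u \<in> S \<or> v \<in> S))"
    and "dstar \<equiv> (\<lambda>v. card {u \<in> W. Estar v u})"
  shows "(\<forall>v \<in> S. dstar v = 2 \<longrightarrow>
            \<not> ((\<exists>a \<in> S. dstar a = 2 \<and> Estar v a) \<and> (\<exists>b \<in> T - T1. Estar v b)))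
       \<and> (\<forall>\<sigma>::real. \<sigma> > 0 \<longrightarrow>
            real (edges_in E (S \<union> T)) = (1 + \<sigma>) * (real (card S) + real (card T)) \<longrightarrow>
              real (card S) - 2 * \<sigma> * (real (card S) + real (card T)) \<le> real (card T1)
            \<and> card T1 \<le> card S
            \<and> (\<Sum>v \<in> W. real (dstar v) - 2) \<le> 2 * \<sigma> * (real (card S) + real (card T)))"
proof -
  have "S \<subseteq> V" unfolding S_def using graph longest by (rule posa_S_subset)
  moreover have "unique_private_neighbours E S"
    unfolding S_def using graph longest by (rule unique_private_neighbours_posa_S)
  ultimately interpret posa_star_graph V E S T T1 W Estar dstar
    using graph mindeg by unfold_locales (auto simp: T_def T1_def W_def Estar_def dstar_def)
  show ?thesis
  proof (intro conjI ballI impI allI notI)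
    show False if "v \<in> S" "dstar v = 2"
      "(\<exists>a \<in> S. dstar a = 2 \<and> Estar v a) \<and> (\<exists>b \<in> T - T1. Estar v b)" for v
      using that S2_no_S2_and_T_neighbours by blast
  next
    fix \<sigma> :: real
    assume "real (edges_in E (S \<union> T)) = (1 + \<sigma>) * (real (card S) + real (card T))"
    then show upper: "(\<Sum>v \<in> W. real (dstar v) - 2) \<le> 2 * \<sigma> * (real (card S) + real (card T))"
      using excess_upper by (simp add: algebra_simps)
    show "real (card S) - 2 * \<sigma> * (real (card S) + real (card T)) \<le> real (card T1)"
      using upper excess_lower by linarith
  qed (rule card_T1_le_card_S)
qed

end
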